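(* For every $k\in\mathbb{N}$, if $W_0=e$ and, for each $j<k$, $(W_j,U_j)\in O$ and $(U_j,W_{j+1})\in I$, then $n(W_k)=\dfrac{4(4^k-1)}{3}$.
   Context: Let $\mathbb{T}$ be the set of finite terms defined inductively by: the constant $e\in\mathbb{T}$; and if $X\in\mathbb{T}$ and $Xs$ is a finite (possibly empty) list of elements of $\mathbb{T}$, then $v(X,Xs)\in\mathbb{T}$ and $w(X,Xs)\in\mathbb{T}$. Write $[\,]$ for the empty list and $[Y|Xs]$ for the list with first element $Y$ followed by $Xs$. Define $n:\mathbb{T}\to\mathbb{N}$ by $n(e)=0$, $n(v(X,[\,]))=2^{n(X)+1}-1$, $n(v(X,[Y|Xs]))=(n(w(Y,Xs))+1)2^{n(X)+1}-1$, $n(w(X,[\,]))=2^{n(X)+2}-2$, $n(w(X,[Y|Xs]))=(n(v(Y,Xs))+2)2^{n(X)+1}-2$. Let $\sigma\subseteq\mathbb{T}\times\mathbb{T}$ be the smallest relation such that: (1) $\sigma(e,v(e,[\,]))$; (2) $\sigma(v(e,[\,]),w(e,[\,]))$; (3) if $\sigma(X,X')$ then $\sigma(v(e,[X|Xs]),w(X',Xs))$; (4) if $\sigma(P,T)$ then $\sigma(v(T,Xs),w(e,[P|Xs]))$; (5) if $\sigma(T,T')$ then $\sigma(w(T,[\,]),v(T',[\,]))$; (6) $\sigma(w(Z,[e]),v(Z,[e]))$; (7) if $\sigma(Y,Y')$ then $\sigma(w(Z,[e,Y|Ys]),v(Z,[Y'|Ys]))$; (8) if $\sigma(X',X)$ then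 $\sigma(w(Z,[X|Xs]),v(Z,[e,X'|Xs]))$. Let $O\subseteq\mathbb{T}\times\mathbb{T}$ consist of $(e,v(e,[\,]))$, $(w(X,Xs),v(e,[X|Xs]))$, and $(v(X,Xs),v(X',Xs))$ whenever $\sigma(X,X')$. Let $I\subseteq\mathbb{T}\times\mathbb{T}$ consist of $(e,w(e,[\,]))$, $(v(X,Xs),w(e,[X|Xs]))$, and $(w(X,Xs),w(X',Xs))$ whenever $\sigma(X,X')$. (These emulate the maps $x\mapsto 2x+1$ and $x\mapsto 2x+2$.) *)

theory Defs
  imports Complex_Main
begin

datatype T = E | V T "T list" | W T "T list"

function n :: "T \<Rightarrow> nat" where
  "n E = 0"
| "n (V X []) = 2 ^ (n X + 1) - 1"
| "n (V X (Y # Xs)) = (n (W Y Xs) + 1) * 2 ^ (n X + 1) - 1"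
| "n (W X []) = 2 ^ (n X + 2) - 2"
| "n (W X (Y # Xs)) = (n (V Y Xs) + 2) * 2 ^ (n X + 1) - 2"
  by pat_completeness auto
termination by (relation "measure size") auto

inductive sigma :: "T \<Rightarrow> T \<Rightarrow> bool" where
  s1: "sigma E (V E [])"
| s2: "sigma (V E []) (W E [])"
| s3: "sigma X X' \<Longrightarrow> sigma (V E (X # Xs)) (W X' Xs)"
| s4: "sigma P T \<Longrightarrow> sigma (V T Xs) (W E (P # Xs))"
| s5: "sigma T T' \<Longrightarrow> sigma (W T []) (V T' [])"
| s6: "sigma (W Z [E]) (V Z [E])"
| s7: "sigma Y Y' \<Longrightarrow> sigma (W Z (E # Y # Ys)) (V Z (Y' # Ys))"
| s8: "sigma X' X \<Longrightarrow> sigma (W Z (X # Xs)) (V Z (E # X' # Xs))"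

inductive O_rel :: "T \<Rightarrow> T \<Rightarrow> bool" where
  "O_rel E (V E [])"
| "O_rel (W X Xs) (V E (X # Xs))"
| "sigma X X' \<Longrightarrow> O_rel (V X Xs) (V X' Xs)"

inductive I_rel :: "T \<Rightarrow> T \<Rightarrow> bool" where
  "I_rel E (W E [])"
| "I_rel (V X Xs) (W E (X # Xs))"
| "sigma X X' \<Longrightarrow> I_rel (W X Xs) (W X' Xs)"

end

theory Submission
  imports Defs
begin

text \<open>Shifting \<open>n\<close> by \<open>1\<close> on \<open>V\<close>-terms and by \<open>2\<close> on \<open>W\<close>-terms removes the truncated
  subtractions: \<open>n (V X Xs) + 1\<close> and \<open>n (W X Xs) + 2\<close> are \<open>2 ^ (n X + 1)\<close> times a factor
  depending only on \<open>Xs\<close>. So replacing the head \<open>X\<close> by a term of value \<open>n X + 1\<close> acts as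
  \<open>x \<mapsto> 2x + 1\<close> resp. \<open>x \<mapsto> 2x + 2\<close> on values, and a rule induction shows that \<open>\<sigma>\<close> is the
  successor on values. Hence \<open>O\<close> and \<open>I\<close> realise \<open>x \<mapsto> 2x + 1\<close> and \<open>x \<mapsto> 2x + 2\<close>, one round
  \<open>O\<close> then \<open>I\<close> is \<open>x \<mapsto> 4x + 4\<close>, and iterating it from \<open>n E = 0\<close> gives \<open>4 (4^k - 1) / 3\<close>.\<close>

fun V_factor :: "T list \<Rightarrow> nat" where
  "V_factor [] = 1"
| "V_factor (Y # Ys) = n (W Y Ys) + 1"

fun W_factor :: "T list \<Rightarrow> nat" where
  "W_factor [] = 2"
| "W_factor (Y # Ys) = n (V Y Ys) + 2"

lemma n_V_plus_1: "n (V X Xs) + 1 = 2 ^ (n X + 1) * V_factor Xs"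
  by (cases Xs) simp_all

lemma n_W_plus_2: "n (W X Xs) + 2 = 2 ^ (n X + 1) * W_factor Xs"
proof (cases Xs)
  case Nil
  have "(2::nat) \<le> 2 ^ (n X + 2)"
    using one_le_power[of "2::nat" "n X"] by simp
  with Nil show ?thesis
    by (simp only: n.simps W_factor.simps le_add_diff_inverse2) (simp add: power_add)
next
  case (Cons Y Ys)
  have "(2::nat) \<le> (n (V Y Ys) + 2) * 1" by simp
  also have "\<dots> \<le> (n (V Y Ys) + 2) * 2 ^ (n X + 1)" by (rule mult_le_mono2) simp
  finally have "(2::nat) \<le> (n (V Y Ys) + 2) * 2 ^ (n X + 1)" .
  with Cons show ?thesis
    by (simp only: n.simps W_factor.simps le_add_diff_inverse2) simp
qed

lemma n_V_head_Suc: "n X' = Suc (n X) \<Longrightarrow> n (V X' Xs) = 2 * n (V X Xs) + 1"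
  using n_V_plus_1[of X' Xs] n_V_plus_1[of X Xs] by simp

lemma n_W_head_Suc: "n X' = Suc (n X) \<Longrightarrow> n (W X' Xs) = 2 * n (W X Xs) + 2"
  using n_W_plus_2[of X' Xs] n_W_plus_2[of X Xs] by simp

lemma n_V_eq_Suc_n_W: "V_factor Xs = W_factor Ys \<Longrightarrow> n (V Z Xs) = Suc (n (W Z Ys))"
  using n_V_plus_1[of Z Xs] n_W_plus_2[of Z Ys] by simp

lemma sigma_imp_n_Suc: "sigma X Y \<Longrightarrow> n Y = Suc (n X)"
proof (induction rule: sigma.induct)
  case (s3 X X' Xs)
  then show ?case using n_W_head_Suc[of X' X Xs] by simp
next
  case (s4 P T Xs)
  then show ?case using n_V_head_Suc[of T P Xs] by simp
next
  case (s5 T T')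
  then show ?case using n_V_plus_1[of T' "[]"] n_W_plus_2[of T "[]"] by simp
next
  case (s6 Z)
  show ?case by (rule n_V_eq_Suc_n_W) simp
next
  case (s7 Y Y' Z Ys)
  then show ?case using n_W_head_Suc[of Y' Y Ys] by (intro n_V_eq_Suc_n_W) simp
next
  case (s8 X' X Z Xs)
  then show ?case using n_V_head_Suc[of X X' Xs] by (intro n_V_eq_Suc_n_W) simp
qed simp_all

lemma O_rel_imp_n: "O_rel X Y \<Longrightarrow> n Y = 2 * n X + 1"
  by (induction rule: O_rel.induct) (auto dest: sigma_imp_n_Suc simp: n_V_head_Suc)

lemma I_rel_imp_n: "I_rel X Y \<Longrightarrow> n Y = 2 * n X + 2"
  by (induction rule: I_rel.induct) (auto dest: sigma_imp_n_Suc simp: n_W_head_Suc)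

lemma iterate_4x_plus_4:
  fixes f :: "nat \<Rightarrow> nat"
  assumes "f 0 = 0" and "\<And>j. j < k \<Longrightarrow> f (Suc j) = 4 * f j + 4"
  shows "real (f k) = 4 * (4 ^ k - 1) / 3"
  using assms(2)
proof (induction k)
  case (Suc k)
  then have "real (f (Suc k)) = 4 * real (f k) + 4" and "real (f k) = 4 * (4 ^ k - 1) / 3"
    by simp_all
  then show ?case by (simp add: field_simps)
qed (simp add: assms(1))

theorem proposition12:
  fixes k :: nat and Ws Us :: "nat \<Rightarrow> T"
  assumes "Ws 0 = E"
    and "\<And>j. j < k \<Longrightarrow> O_rel (Ws j) (Us j) \<and> I_rel (Us j) (Ws (Suc j))"
  shows "real (n (Ws k)) = 4 * (4 ^ k - 1) / 3"
proof (rule iterate_4x_plus_4)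
  show "n (Ws 0) = 0" using assms(1) by simp
  fix j assume "j < k"
  with assms(2) have "n (Us j) = 2 * n (Ws j) + 1" and "n (Ws (Suc j)) = 2 * n (Us j) + 2"
    using O_rel_imp_n I_rel_imp_n by blast+
  then show "n (Ws (Suc j)) = 4 * n (Ws j) + 4" by simp
qed

end
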